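(* In the setting of the sensorless induction machine (scaled model with state $(\tilde i_{s\alpha},\tilde i_{s\beta},\tilde\psi_{r\alpha},\tilde\psi_{r\beta},\omega_e,T_r)$, output $\tilde{\mathcal{I}}_s$, and $6\times6$ observability matrix $\mathcal{O}(x)$ formed from the gradients of $\tilde{\mathcal{I}}_s$, $\mathcal{L}_f\tilde{\mathcal{I}}_s$, $\mathcal{L}_f^2\tilde{\mathcal{I}}_s$), assume the rotor flux $\Psi_r=(\psi_{r\alpha},\psi_{r\beta})$ is nonzero and let $\omega_s=\frac{d}{dt}\angle\Psi_r=\frac{d}{dt}\arctan\frac{\psi_{r\beta}}{\psi_{r\alpha}}$ be the angular velocity of the rotor flux vector (along the model). Then $\det\mathcal{O}(x)\neq0$ if and only if $$\frac{d}{dt}\arctan(\tau_r\omega_e)+\omega_s\neq0 .$$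
   Context: Scaled model: $\dot{\tilde{\mathcal{I}}}_s=\mathcal{V}_s+a\tilde{\mathcal{I}}_s+\gamma\tilde\Psi_r$, $\dot{\tilde\Psi}_r=-\gamma\tilde\Psi_r-(a-b)\tilde{\mathcal{I}}_s$, $\dot\omega_e=\frac{c}{J}\tilde{\mathcal{I}}_s^T\mathbf{J}_2\tilde\Psi_r-\frac{p}{J}T_r$, $\dot T_r=0$, with $\gamma=\frac{1}{\tau_r}\mathbf{I}_2-\omega_e\mathbf{J}_2$, $\mathbf{J}_2=\begin{bmatrix}0&-1\\1&0\end{bmatrix}$, $a=-R_\sigma/L_\sigma$, $b=-R_s/L_\sigma$, $c=p^2/L_\sigma$, $\tau_r=L_r/R_r>0$, $\tilde\Psi_r=k_r\Psi_r$, $\tilde{\mathcal{I}}_s=L_\sigma\mathcal{I}_s$, $p,J>0$. The rows of $\mathcal{O}(x)$ are the gradients, with respect to the state, of $\tilde i_{s\alpha},\tilde i_{s\beta}$ and of their first and second Lie derivatives along the model; $\frac{d}{dt}\arctan(\tau_r\omega_e)=\frac{\tau_r\dot\omega_e}{1+\tau_r^2\omega_e^2}$. *)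

theory Defs
  imports "HOL-Analysis.Analysis"
begin

text \<open>State
  x = (i_sa, i_sb, psi_ra, psi_rb, omega_e, T_r) (all scaled quantities), encoded as
  real^6 with components x$1 .. x$6.  The input V_s = (v1, v2) is a given input
  (it does not depend on the state).  Written out componentwise:
    gamma Psi = Psi / tau_r - omega_e * J2 Psi,  J2 Psi = (-psi_rb, psi_ra),
    I_s^T J2 Psi = - i_sa * psi_rb + i_sb * psi_ra.\<close>

definition im_field ::
  "real \<Rightarrow> real \<Rightarrow> real \<Rightarrow> real \<Rightarrow> real \<Rightarrow> real \<Rightarrow> real \<Rightarrow> real \<Rightarrow> real^6 \<Rightarrow> real^6" where
  "im_field a b c tau_r p J v1 v2 x =
     (let i1 = x$1; i2 = x$2; f1 = x$3; f2 = x$4; w = x$5; T = x$6;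
          g1 = f1 / tau_r + w * f2;
          g2 = f2 / tau_r - w * f1
      in vector [ v1 + a * i1 + g1,
                  v2 + a * i2 + g2,
                  - g1 - (a - b) * i1,
                  - g2 - (a - b) * i2,
                  (c / J) * (- i1 * f2 + i2 * f1) - (p / J) * T,
                  0 ])"

definition lie_deriv :: "(real^6 \<Rightarrow> real^6) \<Rightarrow> (real^6 \<Rightarrow> real) \<Rightarrow> real^6 \<Rightarrow> real" where
  "lie_deriv F h x = frechet_derivative h (at x) (F x)"

definition grad6 :: "(real^6 \<Rightarrow> real) \<Rightarrow> real^6 \<Rightarrow> real^6" where
  "grad6 h x = (\<chi> j. frechet_derivative h (at x) (axis j 1))"

definition out1 :: "real^6 \<Rightarrow> real" where "out1 x = x$1"
definition out2 :: "real^6 \<Rightarrow> real" where "out2 x = x$2"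

definition obs_matrix :: "(real^6 \<Rightarrow> real^6) \<Rightarrow> real^6 \<Rightarrow> real^6^6" where
  "obs_matrix F x = vector
     [ grad6 out1 x,
       grad6 out2 x,
       grad6 (lie_deriv F out1) x,
       grad6 (lie_deriv F out2) x,
       grad6 (lie_deriv F (lie_deriv F out1)) x,
       grad6 (lie_deriv F (lie_deriv F out2)) x ]"

text \<open>Angular velocity of the rotor flux vector along the model:
  d/dt arctan(psi_rb / psi_ra) = (psi_ra * dpsi_rb - psi_rb * dpsi_ra) / |Psi_r|^2.\<close>

definition flux_ang_vel :: "(real^6 \<Rightarrow> real^6) \<Rightarrow> real^6 \<Rightarrow> real" where
  "flux_ang_vel F x =
     (x$3 * (F x)$4 - x$4 * (F x)$3) / ((x$3)^2 + (x$4)^2)"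

end

theory Submission
  imports Defs
begin

text \<open>The outputs are the first two state components, so the first two rows of the
  observability matrix are unit rows and its determinant is the 4\<times>4 minor in the flux,
  speed and load-torque columns.  Expanding that minor gives
  \<open>det \<O> = (p/J) ((1/\<tau>\<^sub>r\<^sup>2 + \<omega>\<^sub>e\<^sup>2) (\<psi>\<^sub>\<alpha> \<psi>'\<^sub>\<beta> - \<psi>\<^sub>\<beta> \<psi>'\<^sub>\<alpha>) + \<omega>'\<^sub>e |\<Psi>\<^sub>r|\<^sup>2 / \<tau>\<^sub>r)\<close>, and pulling out the
  positive factor \<open>(p/J) |\<Psi>\<^sub>r|\<^sup>2 (1 + \<tau>\<^sub>r\<^sup>2 \<omega>\<^sub>e\<^sup>2) / \<tau>\<^sub>r\<^sup>2\<close> leaves exactly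
  \<open>d/dt arctan(\<tau>\<^sub>r \<omega>\<^sub>e) + \<omega>\<^sub>s\<close>.\<close>

lemma exhaust_6:
  fixes x :: 6
  shows "x = 1 \<or> x = 2 \<or> x = 3 \<or> x = 4 \<or> x = 5 \<or> x = 6"
proof (induct x)
  case (of_int z)
  then have "z = 0 \<or> z = 1 \<or> z = 2 \<or> z = 3 \<or> z = 4 \<or> z = 5" by fastforce
  then show ?case by auto
qed

lemma UNIV_6: "UNIV = {1, 2, 3, 4, 5, 6::6}"
  using exhaust_6 by auto

lemma vector_6 [simp]:
  "(vector [x1,x2,x3,x4,x5,x6] :: 'a::zero^6) $ 1 = x1"
  "(vector [x1,x2,x3,x4,x5,x6] :: 'a::zero^6) $ 2 = x2"
  "(vector [x1,x2,x3,x4,x5,x6] :: 'a::zero^6) $ 3 = x3"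
  "(vector [x1,x2,x3,x4,x5,x6] :: 'a::zero^6) $ 4 = x4"
  "(vector [x1,x2,x3,x4,x5,x6] :: 'a::zero^6) $ 5 = x5"
  "(vector [x1,x2,x3,x4,x5,x6] :: 'a::zero^6) $ 6 = x6"
  unfolding vector_def by simp_all

lemma det_eq_sum_permutes_subset:
  fixes A :: "'a::comm_ring_1^'n^'n"
  assumes diag: "\<And>i j. i \<notin> S \<Longrightarrow> j \<noteq> i \<Longrightarrow> A$i$j = 0"
  shows "det A = (\<Sum>p | p permutes S. of_int (sign p) * (\<Prod>i\<in>UNIV. A$i$p i))"
  unfolding det_def
proof (rule sum.mono_neutral_right)
  show "finite {p. p permutes (UNIV::'n set)}"
    by (simp add: finite_permutations)
  show "{p. p permutes S} \<subseteq> {p. p permutes UNIV}"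
    using permutes_subset by blast
  show "\<forall>p \<in> {p. p permutes UNIV} - {p. p permutes S}.
          of_int (sign p) * (\<Prod>i\<in>UNIV. A$i$p i) = 0"
  proof
    fix p assume p: "p \<in> {p. p permutes UNIV} - {p. p permutes S}"
    then obtain i where "i \<notin> S" "p i \<noteq> i"
      by (auto simp: permutes_def)
    then have "A$i$p i = 0"
      using diag by simp
    then have "(\<Prod>i\<in>UNIV. A$i$p i) = 0"
      by (intro prod_zero) auto
    then show "of_int (sign p) * (\<Prod>i\<in>UNIV. A$i$p i) = 0"
      by simp
  qed
qed

lemma det_6_two_diagonal_rows:
  fixes A :: "'a::comm_ring_1^6^6"
  assumes "\<And>j. j \<noteq> 1 \<Longrightarrow> A$1$j = 0"
    and "\<And>j. j \<noteq> 2 \<Longrightarrow> A$2$j = 0"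
  shows "det A = A$1$1 * A$2$2 * (
      A$3$3 * A$4$4 * A$5$5 * A$6$6 - A$3$3 * A$4$4 * A$5$6 * A$6$5 - A$3$3 * A$4$5 * A$5$4 * A$6$6
      + A$3$3 * A$4$5 * A$5$6 * A$6$4 + A$3$3 * A$4$6 * A$5$4 * A$6$5 - A$3$3 * A$4$6 * A$5$5 * A$6$4
      - A$3$4 * A$4$3 * A$5$5 * A$6$6 + A$3$4 * A$4$3 * A$5$6 * A$6$5 + A$3$4 * A$4$5 * A$5$3 * A$6$6
      - A$3$4 * A$4$5 * A$5$6 * A$6$3 - A$3$4 * A$4$6 * A$5$3 * A$6$5 + A$3$4 * A$4$6 * A$5$5 * A$6$3
      + A$3$5 * A$4$3 * A$5$4 * A$6$6 - A$3$5 * A$4$3 * A$5$6 * A$6$4 - A$3$5 * A$4$4 * A$5$3 * A$6$6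
      + A$3$5 * A$4$4 * A$5$6 * A$6$3 + A$3$5 * A$4$6 * A$5$3 * A$6$4 - A$3$5 * A$4$6 * A$5$4 * A$6$3
      - A$3$6 * A$4$3 * A$5$4 * A$6$5 + A$3$6 * A$4$3 * A$5$5 * A$6$4 + A$3$6 * A$4$4 * A$5$3 * A$6$5
      - A$3$6 * A$4$4 * A$5$5 * A$6$3 - A$3$6 * A$4$5 * A$5$3 * A$6$4 + A$3$6 * A$4$5 * A$5$4 * A$6$3)"
    (is "_ = ?rhs")
proof -
  have "det A = (\<Sum>p | p permutes {3,4,5,6}. of_int (sign p) * (\<Prod>i\<in>UNIV. A$i$p i))"
  proof (rule det_eq_sum_permutes_subset)
    fix i j :: 6
    assume "i \<notin> {3,4,5,6}" "j \<noteq> i"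
    moreover have "i = 1 \<or> i = 2"
      using exhaust_6[of i] \<open>i \<notin> {3,4,5,6}\<close> by auto
    ultimately show "A$i$j = 0"
      using assms by auto
  qed
  also have "\<dots> = ?rhs"
  proof -
    have "finite {4,5,6::6}" "3 \<notin> {4,5,6::6}" "finite {5,6::6}" "4 \<notin> {5,6::6}"
      "finite {6::6}" "5 \<notin> {6::6}"
      by auto
    note expand = sum_over_permutations_insert[OF this(1,2)]
      sum_over_permutations_insert[OF this(3,4)] sum_over_permutations_insert[OF this(5,6)]
    show ?thesis
      unfolding expand permutes_sing UNIV_6
      by (simp add: sign_swap_id permutation_swap_id sign_compose swap_id_eq
          permutation_compose algebra_simps)
  qed
  finally show ?thesis .
qed

lemma has_derivative_vec_nth:
  "((\<lambda>y::'a::real_normed_vector^'n. y$i) has_derivative (\<lambda>y. y$i)) F"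
  by (rule bounded_linear_imp_has_derivative) (rule bounded_linear_vec_nth)

lemma lie_deriv_eq_has_derivative:
  "(h has_derivative D) (at x) \<Longrightarrow> lie_deriv F h x = D (F x)"
  unfolding lie_deriv_def by (simp add: frechet_derivative_at[symmetric])

lemma grad6_eq_has_derivative:
  "(h has_derivative D) (at x) \<Longrightarrow> grad6 h x = (\<chi> j. D (axis j 1))"
  unfolding grad6_def by (simp add: frechet_derivative_at[symmetric])

lemma lie_deriv_vec_nth: "lie_deriv F (\<lambda>y. y$i) = (\<lambda>y. F y $ i)"
  using lie_deriv_eq_has_derivative[OF has_derivative_vec_nth] by blast

lemma lie_deriv_arctan_scaled:
  "lie_deriv F (\<lambda>y. arctan (t * y$i)) x = t * F x $ i / (1 + (t * x$i)^2)"
proof -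
  have "((\<lambda>y. arctan (t * y$i)) has_derivative
          (\<lambda>v. t * v$i * inverse (1 + (t * x$i)^2))) (at x)"
    by (auto intro!: derivative_eq_intros has_derivative_vec_nth)
  then show ?thesis
    by (simp add: lie_deriv_eq_has_derivative divide_inverse)
qed

context
  fixes a b c tau p J v1 v2 :: real
begin

abbreviation F :: "real^6 \<Rightarrow> real^6" where
  "F \<equiv> im_field a b c tau p J v1 v2"

definition im_field_deriv :: "real^6 \<Rightarrow> real^6 \<Rightarrow> real^6" where
  "im_field_deriv x v = vector
     [ a * v$1 + v$3 / tau + (v$5 * x$4 + x$5 * v$4),
       a * v$2 + v$4 / tau - (v$5 * x$3 + x$5 * v$3),
       - (v$3 / tau + (v$5 * x$4 + x$5 * v$4)) - (a - b) * v$1,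
       - (v$4 / tau - (v$5 * x$3 + x$5 * v$3)) - (a - b) * v$2,
       (c / J) * (- (v$1 * x$4 + x$1 * v$4) + (v$2 * x$3 + x$2 * v$3)) - (p / J) * v$6,
       0 ]"

lemma im_field_nth:
  "F y $ 1 = v1 + a * y$1 + (y$3 / tau + y$5 * y$4)"
  "F y $ 2 = v2 + a * y$2 + (y$4 / tau - y$5 * y$3)"
  "F y $ 3 = - (y$3 / tau + y$5 * y$4) - (a - b) * y$1"
  "F y $ 4 = - (y$4 / tau - y$5 * y$3) - (a - b) * y$2"
  "F y $ 5 = (c / J) * (- y$1 * y$4 + y$2 * y$3) - (p / J) * y$6"
  "F y $ 6 = 0"
  by (simp_all add: im_field_def Let_def)

lemma has_derivative_im_field_nth:
  "((\<lambda>y. F y $ i) has_derivative (\<lambda>v. im_field_deriv x v $ i)) (at x)"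
  using exhaust_6[of i]
  by (elim disjE; hypsubst; unfold im_field_nth im_field_deriv_def vector_6 divide_inverse)
    (auto intro!: derivative_eq_intros has_derivative_vec_nth simp: algebra_simps)

lemma lie_deriv_im_field_nth:
  "lie_deriv F (\<lambda>y. F y $ i) = (\<lambda>y. im_field_deriv y (F y) $ i)"
  using lie_deriv_eq_has_derivative[OF has_derivative_im_field_nth] by blast

lemma has_derivative_second_lie_deriv_1:
  "((\<lambda>y. im_field_deriv y (F y) $ 1) has_derivative
     (\<lambda>v. a * im_field_deriv x v $ 1 + im_field_deriv x v $ 3 / tau
          + (im_field_deriv x v $ 5 * x$4 + F x $ 5 * v$4
             + (v$5 * F x $ 4 + x$5 * im_field_deriv x v $ 4)))) (at x)"
proof -
  have "(\<lambda>y. im_field_deriv y (F y) $ 1) =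
          (\<lambda>y. a * F y $ 1 + F y $ 3 * inverse tau + (F y $ 5 * y$4 + y$5 * F y $ 4))"
    by (simp add: im_field_deriv_def divide_inverse)
  then show ?thesis
    unfolding divide_inverse
    by (auto intro!: derivative_eq_intros has_derivative_im_field_nth has_derivative_vec_nth)
qed

lemma has_derivative_second_lie_deriv_2:
  "((\<lambda>y. im_field_deriv y (F y) $ 2) has_derivative
     (\<lambda>v. a * im_field_deriv x v $ 2 + im_field_deriv x v $ 4 / tau
          - (im_field_deriv x v $ 5 * x$3 + F x $ 5 * v$3
             + (v$5 * F x $ 3 + x$5 * im_field_deriv x v $ 3)))) (at x)"
proof -
  have "(\<lambda>y. im_field_deriv y (F y) $ 2) =
          (\<lambda>y. a * F y $ 2 + F y $ 4 * inverse tau - (F y $ 5 * y$3 + y$5 * F y $ 3))"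
    by (simp add: im_field_deriv_def divide_inverse)
  then show ?thesis
    unfolding divide_inverse
    by (auto intro!: derivative_eq_intros has_derivative_im_field_nth has_derivative_vec_nth)
qed

lemma det_obs_matrix_im_field:
  "det (obs_matrix F x) = p / J * ((1 / tau^2 + (x$5)^2) * (x$3 * F x $ 4 - x$4 * F x $ 3)
                                   + F x $ 5 * ((x$3)^2 + (x$4)^2) / tau)"
proof -
  have obs: "obs_matrix F x = vector
     [ grad6 (\<lambda>y. y$1) x, grad6 (\<lambda>y. y$2) x,
       grad6 (\<lambda>y. F y $ 1) x, grad6 (\<lambda>y. F y $ 2) x,
       grad6 (\<lambda>y. im_field_deriv y (F y) $ 1) x,
       grad6 (\<lambda>y. im_field_deriv y (F y) $ 2) x ]"
    by (simp add: obs_matrix_def out1_def[abs_def] out2_def[abs_def]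
        lie_deriv_vec_nth lie_deriv_im_field_nth)
  note grads =
    grad6_eq_has_derivative[OF has_derivative_vec_nth]
    grad6_eq_has_derivative[OF has_derivative_im_field_nth]
    grad6_eq_has_derivative[OF has_derivative_second_lie_deriv_1]
    grad6_eq_has_derivative[OF has_derivative_second_lie_deriv_2]
  show ?thesis
    unfolding obs
    by (subst det_6_two_diagonal_rows)
      (simp_all add: grads axis_def,
       simp add: im_field_deriv_def divide_inverse power2_eq_square inverse_mult_distrib, algebra)
qed

end

theorem mainTheorem8:
  fixes a b c tau_r p J v1 v2 :: real and x :: "real^6"
  assumes "tau_r > 0" and "p > 0" and "J > 0"
    and "x$3 \<noteq> 0 \<or> x$4 \<noteq> 0"
  shows "det (obs_matrix (im_field a b c tau_r p J v1 v2) x) \<noteq> 0 \<longleftrightarrow>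
         lie_deriv (im_field a b c tau_r p J v1 v2) (\<lambda>y. arctan (tau_r * y$5)) x
           + flux_ang_vel (im_field a b c tau_r p J v1 v2) x \<noteq> 0"
proof -
  let ?F = "im_field a b c tau_r p J v1 v2"
  let ?r = "(x$3)^2 + (x$4)^2" and ?q = "1 + (tau_r * x$5)^2"
    and ?d = "x$3 * ?F x $ 4 - x$4 * ?F x $ 3"
  have "?r > 0"
    using assms(4) by (simp add: sum_power2_gt_zero_iff)
  have "?q > 0"
    by (simp add: add_pos_nonneg)
  have factor: "q / t^2 * d + f * r / t = q * r / t^2 * (t * f / q + d / r)"
    if "q \<noteq> 0" "r \<noteq> 0" "t \<noteq> 0" for q r t d f :: real
    using that by (simp add: field_simps power2_eq_square)
  have "?q / tau_r^2 = 1 / tau_r^2 + (x$5)^2"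
    using assms(1) by (simp add: add_divide_distrib power_mult_distrib)
  then have "det (obs_matrix ?F x) = p / J * (?q / tau_r^2 * ?d + ?F x $ 5 * ?r / tau_r)"
    by (simp add: det_obs_matrix_im_field)
  also have "\<dots> = p / J * (?q * ?r / tau_r^2) * (tau_r * ?F x $ 5 / ?q + ?d / ?r)"
    using assms(1,4) \<open>?r > 0\<close> \<open>?q > 0\<close> by (subst factor) (simp_all add: mult.assoc)
  also have "\<dots> = p / J * (?q * ?r / tau_r^2) *
      (lie_deriv ?F (\<lambda>y. arctan (tau_r * y$5)) x + flux_ang_vel ?F x)"
    by (simp add: lie_deriv_arctan_scaled flux_ang_vel_def)
  finally show ?thesis
    using assms \<open>?q > 0\<close> by simp
qed

end
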